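(* Let $\textsc{Om}_z$ be the fitness function with unknown target $z\in\{0,1\}^n$ and let $x$ be the current search point. Let $B$ be a set of $b$ known bit positions of which at least $b_0=\beta b$ positions $i$ are non-optimal (i.e., $x_i\neq z_i$), for some $\beta>0$, with the positions of the non-optimal bits distributed uniformly at random in $B$. Let $C,C'$ be sets of bit positions with $|C|=|C'|\le b_0/2$ such that $B,C,C'$ are pairwise disjoint. Then there is a $(1+1)$ elitist black-box strategy that copies the bits of $x$ in $C$ into the positions $C'$ (in a fixed order-preserving correspondence). For any $c>0$ this strategy requires at most $c\cdot|C|\cdot\log(n)/\beta$ iterations with probability $1-n^{-\Omega(c)}$. After the copy operation, at least $b_0-|C|$ bits in $B$ are non-optimal, and their positions are uniformly at random in $B$. The same strategy can be used to overwrite $C'$ with a fixed string (e.g., $(1,\ldots,1)$).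
   Context: For $z\in\{0,1\}^n$, $\textsc{Om}_z(x)=n-\sum_{i=1}^n(x_i\oplus z_i)$. A bit $x_i$ is optimal if $x_i=z_i$, non-optimal otherwise. A $(1+1)$ elitist black-box algorithm stores a single search point $x$; in each iteration it samples an offspring $y$ from a distribution depending only on $x$ (and, for a strategy, on known positions such as $B,C,C'$), learns only whether $f(y)$ is smaller, equal or larger than $f(x)$, and must keep a point of highest fitness among $x,y$ (ties broken arbitrarily). *)

theory Defs
  imports "HOL-Probability.Probability_Mass_Function" "HOL-Combinatorics.Permutations"
begin

text \<open>Search points are functions nat \<Rightarrow> bool; only positions 0..n-1 matter for fitness.\<close>

definition OM :: "nat \<Rightarrow> (nat \<Rightarrow> bool) \<Rightarrow> (nat \<Rightarrow> bool) \<Rightarrow> nat" where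
  "OM n z x = card {i. i < n \<and> x i = z i}"

text \<open>One iteration of a (1+1) elitist black-box algorithm with offspring distribution S
  (depending only on the current point) and (possibly randomised) tie-breaking rule A:
  the algorithm only learns whether f(y) is larger, smaller or equal to f(x).\<close>
definition elitist_step ::
  "nat \<Rightarrow> (nat \<Rightarrow> bool) \<Rightarrow> ((nat \<Rightarrow> bool) \<Rightarrow> (nat \<Rightarrow> bool) pmf)
   \<Rightarrow> ((nat \<Rightarrow> bool) \<Rightarrow> (nat \<Rightarrow> bool) \<Rightarrow> bool pmf) \<Rightarrow> (nat \<Rightarrow> bool) \<Rightarrow> (nat \<Rightarrow> bool) pmf" where
  "elitist_step n z S A x =
     bind_pmf (S x) (\<lambda>y. bind_pmf (A x y) (\<lambda>a.
       return_pmf (if OM n z x < OM n z y then y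
                   else if OM n z y < OM n z x then x
                   else if a then y else x)))"

fun elitist_run ::
  "nat \<Rightarrow> (nat \<Rightarrow> bool) \<Rightarrow> ((nat \<Rightarrow> bool) \<Rightarrow> (nat \<Rightarrow> bool) pmf)
   \<Rightarrow> ((nat \<Rightarrow> bool) \<Rightarrow> (nat \<Rightarrow> bool) \<Rightarrow> bool pmf) \<Rightarrow> nat \<Rightarrow> (nat \<Rightarrow> bool) \<Rightarrow> (nat \<Rightarrow> bool) pmf" where
  "elitist_run n z S A 0 x = return_pmf x"
| "elitist_run n z S A (Suc t) x = bind_pmf (elitist_run n z S A t x) (elitist_step n z S A)"

definition target_of :: "(nat \<Rightarrow> bool) \<Rightarrow> nat set \<Rightarrow> nat set \<Rightarrow> (nat \<Rightarrow> bool) \<Rightarrow> nat \<Rightarrow> bool" where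
  "target_of x B N z0 i = (if i \<in> N then \<not> x i else if i \<in> B then x i else z0 i)"

definition nonopt :: "nat set \<Rightarrow> (nat \<Rightarrow> bool) \<Rightarrow> (nat \<Rightarrow> bool) \<Rightarrow> nat set" where
  "nonopt B z x' = {i \<in> B. x' i \<noteq> z i}"

text \<open>Joint distribution of (target z, search point after t iterations), where the k
  non-optimal positions in B form a uniformly random k-subset of B.\<close>
definition joint ::
  "nat \<Rightarrow> ((nat \<Rightarrow> bool) \<Rightarrow> (nat \<Rightarrow> bool) pmf) \<Rightarrow> ((nat \<Rightarrow> bool) \<Rightarrow> (nat \<Rightarrow> bool) \<Rightarrow> bool pmf)
   \<Rightarrow> nat set \<Rightarrow> nat \<Rightarrow> (nat \<Rightarrow> bool) \<Rightarrow> (nat \<Rightarrow> bool) \<Rightarrow> nat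
   \<Rightarrow> ((nat \<Rightarrow> bool) \<times> (nat \<Rightarrow> bool)) pmf" where
  "joint n S A B k x z0 t =
     bind_pmf (pmf_of_set {N. N \<subseteq> B \<and> card N = k}) (\<lambda>N.
       map_pmf (\<lambda>x'. (target_of x B N z0, x')) (elitist_run n (target_of x B N z0) S A t x))"

text \<open>Goal of the operation: tgt = None means copy x|C into C' via sigma;
  tgt = Some w means overwrite C' with the fixed string w.\<close>
definition goal_reached ::
  "(nat \<Rightarrow> bool) option \<Rightarrow> nat set \<Rightarrow> nat set \<Rightarrow> nat set \<Rightarrow> (nat \<Rightarrow> nat)
   \<Rightarrow> (nat \<Rightarrow> bool) \<Rightarrow> (nat \<Rightarrow> bool) \<Rightarrow> bool" where
  "goal_reached tgt B C C' \<sigma> x x' \<longleftrightarrow>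
     (\<forall>i\<in>C. x' (\<sigma> i) = (case tgt of None \<Rightarrow> x i | Some w \<Rightarrow> w (\<sigma> i))) \<and>
     (\<forall>j. j \<notin> B \<union> C' \<longrightarrow> x' j = x j)"

end

theory Submission
  imports Defs
begin

text \<open>The strategy repairs the copy positions one at a time: it flips the smallest wrong position
  of \<open>C'\<close> together with a uniformly random bit of \<open>B\<close>.  If that bit of \<open>B\<close> was non-optimal the
  offspring is at least as fit and is kept, so each repair succeeds with probability at least
  \<open>\<beta>/2\<close> (at most \<open>|C| \<le> \<beta>|B|/2\<close> non-optimal bits are ever consumed), and the potential
  \<open>2^(number of wrong positions)\<close> contracts in expectation by the factor \<open>1 - \<beta>/4\<close>; Markov's
  inequality gives the tail bound.  Relabelling \<open>B\<close> along a permutation maps the process for one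
  set of non-optimal positions onto the process for the permuted set, which gives the symmetry.\<close>

definition wanted_bit :: "(nat \<Rightarrow> bool) option \<Rightarrow> (nat \<Rightarrow> nat) \<Rightarrow> (nat \<Rightarrow> bool) \<Rightarrow> nat \<Rightarrow> bool" where
  "wanted_bit tgt \<sigma> y i = (case tgt of None \<Rightarrow> y i | Some w \<Rightarrow> w (\<sigma> i))"

definition wrong_copies :: "(nat \<Rightarrow> bool) option \<Rightarrow> nat set \<Rightarrow> (nat \<Rightarrow> nat) \<Rightarrow> (nat \<Rightarrow> bool) \<Rightarrow> nat set" where
  "wrong_copies tgt C \<sigma> y = {i \<in> C. y (\<sigma> i) \<noteq> wanted_bit tgt \<sigma> y i}"

definition flip_pair :: "(nat \<Rightarrow> bool) \<Rightarrow> nat \<Rightarrow> nat \<Rightarrow> nat \<Rightarrow> bool" where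
  "flip_pair y a b = y(a := \<not> y a, b := \<not> y b)"

definition copy_offspring ::
  "nat set \<Rightarrow> nat set \<Rightarrow> (nat \<Rightarrow> nat) \<Rightarrow> (nat \<Rightarrow> bool) option \<Rightarrow> (nat \<Rightarrow> bool) \<Rightarrow> (nat \<Rightarrow> bool) pmf" where
  "copy_offspring B C \<sigma> tgt y =
     (if wrong_copies tgt C \<sigma> y = {} then return_pmf y
      else map_pmf (flip_pair y (\<sigma> (Min (wrong_copies tgt C \<sigma> y)))) (pmf_of_set B))"

definition accept_ties :: "(nat \<Rightarrow> bool) \<Rightarrow> (nat \<Rightarrow> bool) \<Rightarrow> bool pmf" where
  "accept_ties y v = return_pmf True"

lemma elitist_step_accept_ties:
  "elitist_step n z S accept_ties y = map_pmf (\<lambda>v. if OM n z y \<le> OM n z v then v else y) (S y)"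
  unfolding elitist_step_def accept_ties_def map_pmf_def
  by (intro bind_pmf_cong refl) (auto simp: bind_return_pmf)

lemma OM_le_flip_pair:
  assumes "a \<noteq> b" and "b < n" and "y b \<noteq> z b"
  shows "OM n z y \<le> OM n z (flip_pair y a b)"
proof -
  let ?A = "{l. l < n \<and> y l = z l}" and ?A' = "{l. l < n \<and> flip_pair y a b l = z l}"
  have "?A \<subseteq> insert a (?A' - {b})" using assms by (auto simp: flip_pair_def)
  then have "card ?A \<le> card (insert a (?A' - {b}))" by (intro card_mono) auto
  also have "\<dots> \<le> Suc (card (?A' - {b}))" by (rule card_insert_le_m1) simp_all
  also have "\<dots> = card ?A'" using assms by (intro card_Suc_Diff1) (auto simp: flip_pair_def)
  finally show ?thesis by (simp add: OM_def)
qed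

lemma card_nonopt_flip_pair:
  assumes "finite B" and "a \<notin> B"
  shows "card (nonopt B z y) \<le> Suc (card (nonopt B z (flip_pair y a b)))"
proof -
  have "nonopt B z y \<subseteq> insert b (nonopt B z (flip_pair y a b))"
    using assms by (auto simp: nonopt_def flip_pair_def)
  then have "card (nonopt B z y) \<le> card (insert b (nonopt B z (flip_pair y a b)))"
    using assms by (intro card_mono) (auto simp: nonopt_def)
  also have "\<dots> \<le> Suc (card (nonopt B z (flip_pair y a b)))"
    using assms by (intro card_insert_le_m1) (auto simp: nonopt_def)
  finally show ?thesis .
qed

lemma sum_le_of_halved_on_subset:
  fixes f :: "'a \<Rightarrow> real"
  assumes "finite B" and "N \<subseteq> B" and "\<And>j. j \<in> B \<Longrightarrow> f j \<le> a" and "\<And>j. j \<in> N \<Longrightarrow> f j \<le> a / 2"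
  shows "(\<Sum>j\<in>B. f j) \<le> a * card B - a / 2 * card N"
proof -
  have fin: "finite N" using assms(1,2) finite_subset by blast
  have "(\<Sum>j\<in>B. f j) = (\<Sum>j\<in>N. f j) + (\<Sum>j\<in>B - N. f j)"
    using assms(1,2) by (metis sum.subset_diff add.commute)
  also have "\<dots> \<le> (\<Sum>j\<in>N. a / 2) + (\<Sum>j\<in>B - N. a)"
    using assms by (intro add_mono sum_mono) auto
  also have "\<dots> = a * card B - a / 2 * card N"
    using assms(1,2) fin by (simp add: card_Diff_subset of_nat_diff card_mono algebra_simps)
  finally show ?thesis .
qed

lemma decay_le_powr:
  fixes n m t :: nat and c \<beta> F :: real
  assumes n: "n \<ge> 2" and c: "c \<ge> 8" and \<beta>: "0 < \<beta>" "\<beta> \<le> 1" and m: "m \<ge> 1"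
    and t: "real t \<ge> c * real m * ln (real n) / \<beta>" and F: "0 \<le> F" "F \<le> 2 ^ m"
  shows "(1 - \<beta>/4) ^ t * F \<le> real n powr (- (1/8) * c)"
proof -
  define L where "L = ln (real n)"
  have L2: "ln 2 \<le> L" using n unfolding L_def by simp
  have ln2_pos: "0 < ln (2::real)" by simp
  have ln2: "ln 2 \<le> c * L / 8"
  proof -
    have "1 * L \<le> (c/8) * L" by (intro mult_right_mono) (use L2 ln2_pos c in linarith)+
    then show ?thesis using L2 by simp
  qed
  have "real m * ln 2 \<le> real m * (c * L / 8)" using ln2 by (intro mult_left_mono) auto
  moreover have "c * L / 8 \<le> real m * (c * L / 8)"
    using m ln2 ln2_pos
    by (metis dual_order.trans less_imp_le mult_1 mult_right_mono of_nat_1 of_nat_mono)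
  ultimately have exponent: "real m * ln 2 - c * real m * L / 4 \<le> - (c * L / 8)"
    by (simp add: algebra_simps)
  have \<beta>t: "\<beta> * real t \<ge> c * real m * L" using t \<beta> unfolding L_def by (simp add: divide_le_eq mult.commute)
  have "(1 - \<beta>/4) ^ t \<le> exp (- \<beta>/4) ^ t"
    using \<beta> exp_ge_add_one_self[of "-\<beta>/4"] by (intro power_mono) auto
  also have "\<dots> = exp (- (\<beta> * real t) / 4)" by (simp add: exp_of_nat_mult[symmetric] algebra_simps)
  also have "\<dots> \<le> exp (- (c * real m * L) / 4)" using \<beta>t by simp
  finally have "(1 - \<beta>/4) ^ t \<le> exp (- (c * real m * L) / 4)" .
  moreover have "F \<le> exp (real m * ln 2)" using F by (simp add: exp_of_nat_mult)
  ultimately have "(1 - \<beta>/4) ^ t * F \<le> exp (- (c * real m * L) / 4) * exp (real m * ln 2)"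
    using F \<beta> by (intro mult_mono) auto
  also have "\<dots> = exp (real m * ln 2 - c * real m * L / 4)" by (simp add: exp_add[symmetric])
  also have "\<dots> \<le> exp (- (c * L / 8))" using exponent by simp
  also have "\<dots> = real n powr (- (1/8) * c)" using n unfolding L_def powr_def by (simp add: algebra_simps)
  finally show ?thesis .
qed

locale copy_setting =
  fixes n :: nat and B C C' :: "nat set" and \<sigma> :: "nat \<Rightarrow> nat" and tgt :: "(nat \<Rightarrow> bool) option"
    and \<beta> :: real and x :: "nat \<Rightarrow> bool" and k :: nat
  assumes B_bound: "B \<subseteq> {..<n}" and C_bound: "C \<subseteq> {..<n}"
    and B_C_disjoint: "B \<inter> C = {}" and B_C'_disjoint: "B \<inter> C' = {}" and C_C'_disjoint: "C \<inter> C' = {}"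
    and \<sigma>_bij: "bij_betw \<sigma> C C'" and \<beta>_pos: "\<beta> > 0"
    and card_C_le: "real (card C) \<le> \<beta> * real (card B) / 2"
    and k_ge: "\<beta> * real (card B) \<le> real k" and k_le: "k \<le> card B"
begin

abbreviation "offspring \<equiv> copy_offspring B C \<sigma> tgt"
abbreviation "wrong \<equiv> wrong_copies tgt C \<sigma>"

lemma finite_B: "finite B" using B_bound finite_subset by blast
lemma finite_C: "finite C" using C_bound finite_subset by blast

lemma wrong_subset: "wrong y \<subseteq> C" by (auto simp: wrong_copies_def)

lemma Min_wrong_in: "wrong y \<noteq> {} \<Longrightarrow> Min (wrong y) \<in> wrong y"
  using finite_C wrong_subset by (meson Min_in finite_subset)

lemma B_nonempty_and_\<beta>_le_1: "C \<noteq> {} \<Longrightarrow> B \<noteq> {} \<and> \<beta> \<le> 1"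
proof -
  assume "C \<noteq> {}"
  then have "card C \<ge> 1" using finite_C by (simp add: Suc_le_eq card_gt_0_iff)
  then have "card B > 0" using card_C_le \<beta>_pos by (cases "card B = 0") auto
  moreover have "\<beta> * card B \<le> card B" using k_ge k_le by linarith
  ultimately show ?thesis by auto
qed

lemma \<sigma>_in_C': "i \<in> C \<Longrightarrow> \<sigma> i \<in> C'" using \<sigma>_bij by (auto simp: bij_betw_def)

lemma offspring_wrong:
  assumes "wrong y \<noteq> {}"
  shows "offspring y = map_pmf (flip_pair y (\<sigma> (Min (wrong y)))) (pmf_of_set B)"
  using assms by (simp add: copy_offspring_def)

lemma wanted_bit_cong:
  "(\<forall>j. j \<notin> B \<union> C' \<longrightarrow> y j = x j) \<Longrightarrow> i \<in> C \<Longrightarrow> wanted_bit tgt \<sigma> y i = wanted_bit tgt \<sigma> x i"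
  using B_C_disjoint C_C'_disjoint by (auto simp: wanted_bit_def split: option.splits)

lemma wrong_flip_pair:
  assumes off: "\<forall>j. j \<notin> B \<union> C' \<longrightarrow> y j = x j" and i: "i \<in> wrong y" and j: "j \<in> B"
  shows "wrong (flip_pair y (\<sigma> i) j) = wrong y - {i}"
proof -
  have iC: "i \<in> C" using i wrong_subset by blast
  have off': "\<forall>l. l \<notin> B \<union> C' \<longrightarrow> flip_pair y (\<sigma> i) j l = x l"
    using off \<sigma>_in_C'[OF iC] j by (auto simp: flip_pair_def)
  have inj: "inj_on \<sigma> C" using \<sigma>_bij by (auto simp: bij_betw_def)
  have "l \<in> wrong (flip_pair y (\<sigma> i) j) \<longleftrightarrow> l \<in> wrong y - {i}" if l: "l \<in> C" for l
  proof -
    have "flip_pair y (\<sigma> i) j (\<sigma> l) = (if l = i then \<not> y (\<sigma> i) else y (\<sigma> l))"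
      using \<sigma>_in_C'[OF l] B_C'_disjoint j inj l iC by (auto simp: flip_pair_def inj_on_def)
    then show ?thesis
      using l i wanted_bit_cong[OF off' l] wanted_bit_cong[OF off l] by (auto simp: wrong_copies_def)
  qed
  then show ?thesis using wrong_subset by blast
qed

text \<open>Every accepted repair consumes at most one non-optimal bit of \<open>B\<close>, and at most \<open>|C|\<close>
  repairs are needed.\<close>
definition copy_invariant :: "(nat \<Rightarrow> bool) \<Rightarrow> (nat \<Rightarrow> bool) \<Rightarrow> bool" where
  "copy_invariant z y \<longleftrightarrow>
     (\<forall>j. j \<notin> B \<union> C' \<longrightarrow> y j = x j) \<and> k + card (wrong y) \<le> card (nonopt B z y) + card C"

lemma copy_invariant_step:
  assumes inv: "copy_invariant z y" and v: "v \<in> set_pmf (elitist_step n z offspring accept_ties y)"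
  shows "copy_invariant z v"
proof (cases "wrong y = {}")
  case True
  then show ?thesis using inv v by (auto simp: elitist_step_accept_ties copy_offspring_def)
next
  case False
  define i where "i = Min (wrong y)"
  have i: "i \<in> wrong y" and iC: "i \<in> C" using Min_wrong_in[OF False] wrong_subset i_def by auto
  have "B \<noteq> {}" using B_nonempty_and_\<beta>_le_1 iC by blast
  then obtain j where j: "j \<in> B" and v: "v = y \<or> v = flip_pair y (\<sigma> i) j"
    using v False finite_B by (auto simp: elitist_step_accept_ties offspring_wrong i_def split: if_splits)
  have off: "\<forall>l. l \<notin> B \<union> C' \<longrightarrow> y l = x l" using inv by (simp add: copy_invariant_def)
  have "card (wrong y) = Suc (card (wrong (flip_pair y (\<sigma> i) j)))"
    using wrong_flip_pair[OF off i j] i finite_C wrong_subset by (metis card_Suc_Diff1 finite_subset)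
  moreover have "card (nonopt B z y) \<le> Suc (card (nonopt B z (flip_pair y (\<sigma> i) j)))"
    using card_nonopt_flip_pair finite_B \<sigma>_in_C'[OF iC] B_C'_disjoint by blast
  moreover have "\<forall>l. l \<notin> B \<union> C' \<longrightarrow> flip_pair y (\<sigma> i) j l = x l"
    using off \<sigma>_in_C'[OF iC] j by (auto simp: flip_pair_def)
  ultimately show ?thesis using v inv by (auto simp: copy_invariant_def)
qed

lemma copy_invariant_run:
  "copy_invariant z x \<Longrightarrow> v \<in> set_pmf (elitist_run n z offspring accept_ties t x) \<Longrightarrow> copy_invariant z v"
  by (induction t arbitrary: v) (auto intro: copy_invariant_step)

lemma goal_reached_iff:
  assumes "copy_invariant z v"
  shows "goal_reached tgt B C C' \<sigma> x v \<longleftrightarrow> wrong v = {}"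
proof -
  have off: "\<forall>j. j \<notin> B \<union> C' \<longrightarrow> v j = x j" using assms by (simp add: copy_invariant_def)
  then have "\<forall>i\<in>C. wanted_bit tgt \<sigma> v i = (case tgt of None \<Rightarrow> x i | Some w \<Rightarrow> w (\<sigma> i))"
    using wanted_bit_cong[OF off] by (simp add: wanted_bit_def)
  then show ?thesis using off unfolding goal_reached_def wrong_copies_def by auto
qed

text \<open>The value \<open>0\<close> on finished points makes the potential dominate the failure indicator.\<close>
definition potential :: "(nat \<Rightarrow> bool) \<Rightarrow> real" where
  "potential y = (if wrong y = {} then 0 else 2 ^ card (wrong y))"

lemma potential_nonneg: "potential y \<ge> 0" by (simp add: potential_def)

lemma potential_le: "potential y \<le> 2 ^ card C"
  using card_mono[OF finite_C wrong_subset[of y]] by (simp add: potential_def power_increasing)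

lemma potential_empty_C: "C = {} \<Longrightarrow> potential y = 0"
  unfolding potential_def using wrong_subset[of y] by auto

lemma decay_potential_nonneg: "0 \<le> (1 - \<beta>/4) ^ t * potential x"
  using B_nonempty_and_\<beta>_le_1 potential_empty_C potential_nonneg by (cases "C = {}") auto

lemma expected_potential_step:
  assumes inv: "copy_invariant z y"
  shows "(\<integral>\<^sup>+v. potential v \<partial>elitist_step n z offspring accept_ties y) \<le> ennreal ((1 - \<beta>/4) * potential y)"
proof (cases "wrong y = {}")
  case True
  then show ?thesis by (simp add: elitist_step_accept_ties copy_offspring_def potential_def)
next
  case False
  define i where "i = Min (wrong y)"
  define w where "w = card (wrong y)"
  define N where "N = nonopt B z y"
  define h where "h j = (if OM n z y \<le> OM n z (flip_pair y (\<sigma> i) j) then flip_pair y (\<sigma> i) j else y)" for j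
  have i: "i \<in> wrong y" and iC: "i \<in> C" using Min_wrong_in[OF False] wrong_subset i_def by auto
  have B: "B \<noteq> {}" "finite B" using B_nonempty_and_\<beta>_le_1 iC finite_B by auto
  have off: "\<forall>l. l \<notin> B \<union> C' \<longrightarrow> y l = x l" using inv by (simp add: copy_invariant_def)
  have w: "w \<ge> 1" using False finite_C wrong_subset w_def
    by (metis One_nat_def Suc_le_eq card_gt_0_iff finite_subset)
  have potential_y: "potential y = 2 ^ w" using False by (simp add: potential_def w_def)
  have halved: "potential (flip_pair y (\<sigma> i) j) \<le> 2 ^ w / 2" if "j \<in> B" for j
    using wrong_flip_pair[OF off i that] i w
    by (cases w) (auto simp: potential_def w_def)
  have h_le: "potential (h j) \<le> 2 ^ w" if "j \<in> B" for j
    using halved[OF that] potential_y potential_nonneg[of "flip_pair y (\<sigma> i) j"] by (auto simp: h_def)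
  have h_halved: "potential (h j) \<le> 2 ^ w / 2" if "j \<in> N" for j
  proof -
    have "j \<in> B" "y j \<noteq> z j" using that by (auto simp: N_def nonopt_def)
    moreover have "\<sigma> i \<noteq> j" using \<sigma>_in_C'[OF iC] B_C'_disjoint \<open>j \<in> B\<close> by blast
    ultimately show ?thesis using OM_le_flip_pair[of "\<sigma> i" j n y z] B_bound halved by (auto simp: h_def)
  qed
  have card_N: "real (card N) \<ge> \<beta> * card B / 2"
    using inv w k_ge card_C_le by (simp add: copy_invariant_def N_def w_def)
  have "elitist_step n z offspring accept_ties y = map_pmf h (pmf_of_set B)"
    unfolding elitist_step_accept_ties offspring_wrong[OF False] h_def[abs_def] i_def
    by (simp add: map_pmf_comp)
  then have "(\<integral>\<^sup>+v. potential v \<partial>elitist_step n z offspring accept_ties y)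
        = (\<integral>\<^sup>+j. potential (h j) \<partial>pmf_of_set B)"
    by simp
  also have "\<dots> = ennreal (\<integral>j. potential (h j) \<partial>pmf_of_set B)"
    using B potential_nonneg by (intro nn_integral_eq_integral) (auto intro!: integrable_measure_pmf_finite simp: set_pmf_of_set[OF B])
  also have "(\<integral>j. potential (h j) \<partial>pmf_of_set B) = (\<Sum>j\<in>B. potential (h j)) / card B"
    using B by (simp add: integral_pmf_of_set)
  also have "\<dots> \<le> (1 - \<beta>/4) * potential y"
  proof -
    have "(\<Sum>j\<in>B. potential (h j)) \<le> 2 ^ w * real (card B) - 2 ^ w / 2 * real (card N)"
      by (rule sum_le_of_halved_on_subset[OF B(2) _ h_le h_halved]) (auto simp: N_def nonopt_def)
    also have "\<dots> \<le> (1 - \<beta>/4) * potential y * card B"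
      using mult_left_mono[OF card_N, of "2 ^ w / 2"] by (simp add: potential_y algebra_simps)
    finally show ?thesis using B by (simp add: card_gt_0_iff pos_divide_le_eq)
  qed
  finally show ?thesis by (simp add: ennreal_leI)
qed

lemma expected_potential_run:
  assumes inv: "copy_invariant z x"
  shows "(\<integral>\<^sup>+v. potential v \<partial>elitist_run n z offspring accept_ties t x) \<le> ennreal ((1 - \<beta>/4) ^ t * potential x)"
proof (cases "C = {}")
  case True
  show ?thesis unfolding potential_empty_C[OF True] by simp
next
  case False
  then have rate: "0 \<le> 1 - \<beta>/4" using B_nonempty_and_\<beta>_le_1 by simp
  show ?thesis
  proof (induction t)
    case 0
    then show ?case by simp
  next
    case (Suc t)
    let ?run = "elitist_run n z offspring accept_ties t x"
    have "(\<integral>\<^sup>+v. potential v \<partial>elitist_run n z offspring accept_ties (Suc t) x)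
        = (\<integral>\<^sup>+u. (\<integral>\<^sup>+v. potential v \<partial>elitist_step n z offspring accept_ties u) \<partial>?run)"
      by simp
    also have "\<dots> \<le> (\<integral>\<^sup>+u. ennreal (1 - \<beta>/4) * potential u \<partial>?run)"
    proof (intro nn_integral_mono_AE AE_pmfI)
      fix u assume "u \<in> set_pmf ?run"
      then have "copy_invariant z u" using copy_invariant_run[OF inv] by blast
      then show "(\<integral>\<^sup>+v. potential v \<partial>elitist_step n z offspring accept_ties u) \<le> ennreal (1 - \<beta>/4) * potential u"
        using expected_potential_step ennreal_mult[OF rate potential_nonneg] by simp
    qed
    also have "\<dots> = ennreal (1 - \<beta>/4) * (\<integral>\<^sup>+u. potential u \<partial>?run)"
      by (rule nn_integral_cmult) simp
    also have "\<dots> \<le> ennreal (1 - \<beta>/4) * ennreal ((1 - \<beta>/4) ^ t * potential x)"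
      by (rule mult_left_mono[OF Suc]) simp
    also have "\<dots> = ennreal ((1 - \<beta>/4) ^ Suc t * potential x)"
      using rate potential_nonneg by (simp add: ennreal_mult[symmetric] mult.assoc)
    finally show ?case .
  qed
qed

lemma prob_run_not_goal:
  assumes inv: "copy_invariant z x"
  shows "measure_pmf.prob (elitist_run n z offspring accept_ties t x) {v. \<not> goal_reached tgt B C C' \<sigma> x v}
    \<le> (1 - \<beta>/4) ^ t * potential x"
proof -
  let ?p = "elitist_run n z offspring accept_ties t x" and ?A = "{v. \<not> goal_reached tgt B C C' \<sigma> x v}"
  have "emeasure ?p ?A = (\<integral>\<^sup>+v. indicator ?A v \<partial>?p)" by simp
  also have "\<dots> \<le> (\<integral>\<^sup>+v. potential v \<partial>?p)"
  proof (intro nn_integral_mono_AE AE_pmfI)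
    fix v assume "v \<in> set_pmf ?p"
    then have "v \<in> ?A \<Longrightarrow> wrong v \<noteq> {}" using goal_reached_iff copy_invariant_run[OF inv] by blast
    then show "indicator ?A v \<le> ennreal (potential v)"
      by (cases "v \<in> ?A") (auto simp: potential_def)
  qed
  also have "\<dots> \<le> ennreal ((1 - \<beta>/4) ^ t * potential x)" by (rule expected_potential_run[OF inv])
  finally show ?thesis using decay_potential_nonneg[of t] by (simp add: measure_pmf.emeasure_eq_measure)
qed

lemma finite_k_subsets: "finite {N. N \<subseteq> B \<and> card N = k}"
  using finite_B by (rule finite_subset[rotated, OF finite_Pow_iff[THEN iffD2]]) auto

lemma k_subsets_nonempty: "{N. N \<subseteq> B \<and> card N = k} \<noteq> {}"
  using obtain_subset_with_card_n[OF k_le] by blast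

lemma set_pmf_k_subsets: "set_pmf (pmf_of_set {N. N \<subseteq> B \<and> card N = k}) = {N. N \<subseteq> B \<and> card N = k}"
  using finite_k_subsets k_subsets_nonempty by simp

lemma copy_invariant_init: "N \<subseteq> B \<Longrightarrow> card N = k \<Longrightarrow> copy_invariant (target_of x B N z0) x"
proof -
  assume "N \<subseteq> B" "card N = k"
  then have "nonopt B (target_of x B N z0) x = N" by (auto simp: nonopt_def target_of_def)
  then show ?thesis
    using \<open>card N = k\<close> card_mono[OF finite_C wrong_subset[of x]] by (simp add: copy_invariant_def)
qed

lemma prob_joint_not_goal:
  "measure_pmf.prob (joint n offspring accept_ties B k x z0 t) {p. \<not> goal_reached tgt B C C' \<sigma> x (snd p)}
    \<le> (1 - \<beta>/4) ^ t * potential x"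
proof -
  let ?K = "{N. N \<subseteq> B \<and> card N = k}" and ?A = "{v. \<not> goal_reached tgt B C C' \<sigma> x v}"
  have "emeasure (joint n offspring accept_ties B k x z0 t) {p. \<not> goal_reached tgt B C C' \<sigma> x (snd p)}
      = (\<integral>\<^sup>+N. emeasure (elitist_run n (target_of x B N z0) offspring accept_ties t x) ?A \<partial>pmf_of_set ?K)"
    unfolding joint_def by (simp add: vimage_def)
  also have "\<dots> \<le> (\<integral>\<^sup>+N. ennreal ((1 - \<beta>/4) ^ t * potential x) \<partial>pmf_of_set ?K)"
  proof (intro nn_integral_mono_AE AE_pmfI)
    fix N assume "N \<in> set_pmf (pmf_of_set ?K)"
    then have "copy_invariant (target_of x B N z0) x" using copy_invariant_init set_pmf_k_subsets by simp
    from prob_run_not_goal[OF this, of t]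
    show "emeasure (elitist_run n (target_of x B N z0) offspring accept_ties t x) ?A
        \<le> ennreal ((1 - \<beta>/4) ^ t * potential x)"
      by (simp add: measure_pmf.emeasure_eq_measure ennreal_leI)
  qed
  finally show ?thesis using decay_potential_nonneg[of t] by (simp add: measure_pmf.emeasure_eq_measure)
qed

lemma card_nonopt_joint_goal:
  assumes p: "p \<in> set_pmf (joint n offspring accept_ties B k x z0 t)"
    and goal: "goal_reached tgt B C C' \<sigma> x (snd p)"
  shows "real (card (nonopt B (fst p) (snd p))) \<ge> \<beta> * real (card B) - real (card C)"
proof -
  obtain N v where N: "N \<subseteq> B" "card N = k" and v: "v \<in> set_pmf (elitist_run n (target_of x B N z0) offspring accept_ties t x)"
    and p_eq: "p = (target_of x B N z0, v)"
    using p set_pmf_k_subsets unfolding joint_def by auto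
  have "copy_invariant (target_of x B N z0) v" using copy_invariant_run[OF copy_invariant_init[OF N] v] .
  moreover from this have "wrong v = {}" using goal_reached_iff goal p_eq by simp
  ultimately show ?thesis using k_ge p_eq by (simp add: copy_invariant_def)
qed

end

text \<open>Relabelling along \<open>\<pi>\<close> transports the deviation of a search point from \<open>x\<close> inside \<open>B\<close>;
  outside \<open>B\<close> it changes nothing.\<close>
locale copy_setting_perm = copy_setting +
  fixes \<pi> :: "nat \<Rightarrow> nat"
  assumes \<pi>_permutes: "\<pi> permutes B"
begin

definition relabel :: "(nat \<Rightarrow> bool) \<Rightarrow> nat \<Rightarrow> bool" where
  "relabel y i = (if i \<in> B then x i \<noteq> (y (inv \<pi> i) \<noteq> x (inv \<pi> i)) else y i)"

lemma \<pi>_inverse: "inv \<pi> (\<pi> b) = b" "\<pi> (inv \<pi> b) = b" using permutes_inverses[OF \<pi>_permutes] by auto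
lemma \<pi>_in_B_iff: "\<pi> b \<in> B \<longleftrightarrow> b \<in> B" using permutes_in_image[OF \<pi>_permutes] .
lemma inj_\<pi>: "inj \<pi>" using permutes_inj[OF \<pi>_permutes] .

lemma relabel_\<pi>: "b \<in> B \<Longrightarrow> relabel y (\<pi> b) = (x (\<pi> b) \<noteq> (y b \<noteq> x b))"
  by (simp add: relabel_def \<pi>_in_B_iff \<pi>_inverse)

lemma relabel_outside: "i \<notin> B \<Longrightarrow> relabel y i = y i" by (simp add: relabel_def)

lemma relabel_x: "relabel x = x" by (auto simp: relabel_def fun_eq_iff)

lemma Collect_eq_image_\<pi>: "(\<And>b. P (\<pi> b) \<longleftrightarrow> Q b) \<Longrightarrow> {i. P i} = \<pi> ` {b. Q b}"
  using \<pi>_inverse by (metis (mono_tags) image_iff mem_Collect_eq subsetI subset_antisym)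

lemma relabel_eq_target_iff:
  assumes "N \<subseteq> B"
  shows "relabel y (\<pi> b) = target_of x B (\<pi> ` N) z0 (\<pi> b) \<longleftrightarrow> y b = target_of x B N z0 b"
proof (cases "b \<in> B")
  case True
  have "\<pi> b \<in> \<pi> ` N \<longleftrightarrow> b \<in> N" using inj_\<pi> by (simp add: inj_image_mem_iff)
  then show ?thesis using True \<pi>_in_B_iff[of b] by (auto simp: relabel_\<pi> target_of_def)
next
  case False
  then have "\<pi> b = b" "b \<notin> \<pi> ` N" "b \<notin> N"
    using permutes_not_in[OF \<pi>_permutes] assms permutes_image[OF \<pi>_permutes] by auto
  then show ?thesis using False by (simp add: relabel_outside target_of_def)
qed

lemma OM_relabel:
  assumes "N \<subseteq> B"
  shows "OM n (target_of x B (\<pi> ` N) z0) (relabel y) = OM n (target_of x B N z0) y"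
proof -
  have "\<pi> b < n \<longleftrightarrow> b < n" for b
    using \<pi>_in_B_iff[of b] B_bound permutes_not_in[OF \<pi>_permutes, of b] by (cases "b \<in> B") auto
  then have "{i. i < n \<and> relabel y i = target_of x B (\<pi> ` N) z0 i}
      = \<pi> ` {b. b < n \<and> y b = target_of x B N z0 b}"
    by (intro Collect_eq_image_\<pi>) (simp add: relabel_eq_target_iff[OF assms])
  then show ?thesis unfolding OM_def using inj_\<pi> by (simp add: card_image inj_on_subset)
qed

lemma nonopt_relabel:
  assumes "N \<subseteq> B"
  shows "nonopt B (target_of x B (\<pi> ` N) z0) (relabel y) = \<pi> ` nonopt B (target_of x B N z0) y"
proof -
  have "{i. i \<in> B \<and> relabel y i \<noteq> target_of x B (\<pi> ` N) z0 i}
      = \<pi> ` {b. b \<in> B \<and> y b \<noteq> target_of x B N z0 b}"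
    by (rule Collect_eq_image_\<pi>) (simp add: relabel_eq_target_iff[OF assms] \<pi>_in_B_iff)
  then show ?thesis unfolding nonopt_def by simp
qed

lemma goal_reached_relabel: "goal_reached tgt B C C' \<sigma> x (relabel y) = goal_reached tgt B C C' \<sigma> x y"
proof -
  have "\<forall>i\<in>C. relabel y (\<sigma> i) = y (\<sigma> i)" using \<sigma>_in_C' B_C'_disjoint relabel_outside by blast
  moreover have "\<forall>j. j \<notin> B \<union> C' \<longrightarrow> relabel y j = y j" using relabel_outside by blast
  ultimately show ?thesis unfolding goal_reached_def by auto
qed

lemma wrong_relabel: "wrong (relabel y) = wrong y"
proof -
  have "relabel y i = y i" "relabel y (\<sigma> i) = y (\<sigma> i)" if "i \<in> C" for i
    using that \<sigma>_in_C' B_C_disjoint B_C'_disjoint relabel_outside by blast+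
  then show ?thesis by (auto simp: wrong_copies_def wanted_bit_def split: option.splits)
qed

lemma relabel_flip_pair:
  assumes "a \<notin> B" and "j \<in> B"
  shows "relabel (flip_pair y a j) = flip_pair (relabel y) a (\<pi> j)"
proof
  fix l
  show "relabel (flip_pair y a j) l = flip_pair (relabel y) a (\<pi> j) l"
  proof (cases "l \<in> B")
    case True
    then obtain b where l: "l = \<pi> b" and b: "b \<in> B" using \<pi>_inverse \<pi>_in_B_iff by metis
    have "(\<pi> b = \<pi> j) = (b = j)" using inj_\<pi> by (simp add: inj_eq)
    then show ?thesis using assms b \<pi>_in_B_iff unfolding l by (auto simp: flip_pair_def relabel_\<pi>)
  next
    case False
    then show ?thesis using assms \<pi>_in_B_iff by (auto simp: flip_pair_def relabel_outside)
  qed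
qed

text \<open>The uniform choice of the flipped bit of \<open>B\<close> is invariant under \<open>\<pi>\<close>.\<close>
lemma offspring_relabel: "offspring (relabel y) = map_pmf relabel (offspring y)"
proof (cases "wrong y = {}")
  case True
  then show ?thesis by (simp add: copy_offspring_def wrong_relabel)
next
  case False
  define a where "a = \<sigma> (Min (wrong y))"
  have "a \<in> C'" using Min_wrong_in[OF False] wrong_subset \<sigma>_in_C' a_def by blast
  then have a: "a \<notin> B" using B_C'_disjoint by blast
  have B: "B \<noteq> {}" "finite B" using B_nonempty_and_\<beta>_le_1 Min_wrong_in[OF False] wrong_subset finite_B by blast+
  have "map_pmf relabel (offspring y) = map_pmf (\<lambda>j. flip_pair (relabel y) a (\<pi> j)) (pmf_of_set B)"
    using False relabel_flip_pair[OF a] B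
    by (auto simp: offspring_wrong map_pmf_comp a_def set_pmf_of_set[OF B] intro!: map_pmf_cong)
  also have "\<dots> = map_pmf (flip_pair (relabel y) a) (map_pmf \<pi> (pmf_of_set B))"
    by (simp add: map_pmf_comp)
  also have "map_pmf \<pi> (pmf_of_set B) = pmf_of_set B"
    using map_pmf_of_set_inj[OF permutes_inj_on[OF \<pi>_permutes] B] permutes_image[OF \<pi>_permutes] by simp
  finally show ?thesis using False by (simp add: offspring_wrong wrong_relabel a_def)
qed

lemma elitist_run_relabel:
  assumes "N \<subseteq> B"
  shows "elitist_run n (target_of x B (\<pi> ` N) z0) offspring accept_ties t x
    = map_pmf relabel (elitist_run n (target_of x B N z0) offspring accept_ties t x)"
proof (induction t)
  case 0
  then show ?case by (simp add: relabel_x)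
next
  case (Suc t)
  have "elitist_step n (target_of x B (\<pi> ` N) z0) offspring accept_ties (relabel y)
      = map_pmf relabel (elitist_step n (target_of x B N z0) offspring accept_ties y)" for y
    unfolding elitist_step_accept_ties offspring_relabel
    by (simp add: map_pmf_comp OM_relabel[OF assms] if_distrib[of relabel])
  then show ?case by (simp add: Suc bind_map_pmf map_bind_pmf)
qed

lemma image_\<pi>_k_subsets: "(`) \<pi> ` {N. N \<subseteq> B \<and> card N = k} = {N. N \<subseteq> B \<and> card N = k}"
  (is "_ ` ?K = ?K")
proof -
  have into: "\<rho> ` N \<in> ?K" if "\<rho> permutes B" and "N \<in> ?K" for \<rho> N
    using that permutes_image[OF that(1)] permutes_inj[OF that(1)] by (auto simp: card_image inj_on_subset)
  show ?thesis
  proof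
    show "(`) \<pi> ` ?K \<subseteq> ?K" by (rule image_subsetI) (rule into[OF \<pi>_permutes])
    show "?K \<subseteq> (`) \<pi> ` ?K"
    proof
      fix N assume N: "N \<in> ?K"
      show "N \<in> (`) \<pi> ` ?K"
      proof (rule image_eqI)
        show "N = \<pi> ` inv \<pi> ` N" using image_f_inv_f[OF permutes_surj[OF \<pi>_permutes]] by simp
        show "inv \<pi> ` N \<in> ?K" using into[OF permutes_inv[OF \<pi>_permutes] N] .
      qed
    qed
  qed
qed

lemma prob_joint_nonopt_image:
  "measure_pmf.prob (joint n offspring accept_ties B k x z0 t)
     {p. goal_reached tgt B C C' \<sigma> x (snd p) \<and> nonopt B (fst p) (snd p) = D}
 = measure_pmf.prob (joint n offspring accept_ties B k x z0 t)
     {p. goal_reached tgt B C C' \<sigma> x (snd p) \<and> nonopt B (fst p) (snd p) = \<pi> ` D}"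
proof -
  let ?K = "{N. N \<subseteq> B \<and> card N = k}"
  let ?G = "\<lambda>D N. emeasure (elitist_run n (target_of x B N z0) offspring accept_ties t x)
     {v. goal_reached tgt B C C' \<sigma> x v \<and> nonopt B (target_of x B N z0) v = D}"
  have "inj_on ((`) \<pi>) ?K" using inj_\<pi> by (auto simp: inj_on_def inj_image_eq_iff)
  from map_pmf_of_set_inj[OF this k_subsets_nonempty finite_k_subsets]
  have uniform: "map_pmf ((`) \<pi>) (pmf_of_set ?K) = pmf_of_set ?K"
    unfolding image_\<pi>_k_subsets .
  have G_image: "?G (\<pi> ` D) (\<pi> ` N) = ?G D N" if "N \<in> ?K" for N
  proof -
    have NB: "N \<subseteq> B" using that by simp
    show ?thesis
      unfolding elitist_run_relabel[OF NB]
      using goal_reached_relabel nonopt_relabel[OF NB] inj_\<pi> by (simp add: vimage_def inj_image_eq_iff)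
  qed
  have "emeasure (joint n offspring accept_ties B k x z0 t)
      {p. goal_reached tgt B C C' \<sigma> x (snd p) \<and> nonopt B (fst p) (snd p) = \<pi> ` D}
      = (\<integral>\<^sup>+N. ?G (\<pi> ` D) N \<partial>pmf_of_set ?K)"
    unfolding joint_def by (simp add: vimage_def)
  also have "\<dots> = (\<integral>\<^sup>+N. ?G (\<pi> ` D) (\<pi> ` N) \<partial>pmf_of_set ?K)"
    by (subst uniform[symmetric]) simp
  also have "\<dots> = (\<integral>\<^sup>+N. ?G D N \<partial>pmf_of_set ?K)"
    by (intro nn_integral_cong_AE AE_pmfI) (simp add: G_image set_pmf_k_subsets)
  also have "\<dots> = emeasure (joint n offspring accept_ties B k x z0 t)
      {p. goal_reached tgt B C C' \<sigma> x (snd p) \<and> nonopt B (fst p) (snd p) = D}"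
    unfolding joint_def by (simp add: vimage_def)
  finally show ?thesis by (simp add: measure_pmf.emeasure_eq_measure)
qed

end

context copy_setting
begin

lemma copy_strategy_guarantees:
  assumes n: "2 \<le> n" and c: "8 \<le> c"
  shows "(\<forall>t::nat. real t \<ge> c * real (card C) * ln (real n) / \<beta> \<longrightarrow>
             measure_pmf.prob (joint n offspring accept_ties B k x z0 t)
               {p. \<not> goal_reached tgt B C C' \<sigma> x (snd p)} \<le> real n powr (- (1/8) * c)) \<and>
         (\<forall>t::nat. \<forall>p \<in> set_pmf (joint n offspring accept_ties B k x z0 t).
             goal_reached tgt B C C' \<sigma> x (snd p) \<longrightarrow>
             real (card (nonopt B (fst p) (snd p))) \<ge> \<beta> * real (card B) - real (card C)) \<and>
         (\<forall>(t::nat) \<pi> D. \<pi> permutes B \<longrightarrow>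
             measure_pmf.prob (joint n offspring accept_ties B k x z0 t)
               {p. goal_reached tgt B C C' \<sigma> x (snd p) \<and> nonopt B (fst p) (snd p) = D} =
             measure_pmf.prob (joint n offspring accept_ties B k x z0 t)
               {p. goal_reached tgt B C C' \<sigma> x (snd p) \<and> nonopt B (fst p) (snd p) = \<pi> ` D})"
proof (intro conjI allI impI ballI)
  fix t :: nat assume t: "real t \<ge> c * real (card C) * ln (real n) / \<beta>"
  have "(1 - \<beta>/4) ^ t * potential x \<le> real n powr (- (1/8) * c)"
  proof (cases "C = {}")
    case True
    show ?thesis unfolding potential_empty_C[OF True] by simp
  next
    case False
    then have "card C \<ge> 1" using finite_C by (simp add: Suc_le_eq card_gt_0_iff)
    then show ?thesis
      using decay_le_powr[OF n c \<beta>_pos _ _ t potential_nonneg potential_le] B_nonempty_and_\<beta>_le_1[OF False] by simp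
  qed
  with prob_joint_not_goal
  show "measure_pmf.prob (joint n offspring accept_ties B k x z0 t)
      {p. \<not> goal_reached tgt B C C' \<sigma> x (snd p)} \<le> real n powr (- (1/8) * c)"
    by (rule order_trans)
next
  fix t p
  assume "p \<in> set_pmf (joint n offspring accept_ties B k x z0 t)" and "goal_reached tgt B C C' \<sigma> x (snd p)"
  then show "\<beta> * real (card B) - real (card C) \<le> real (card (nonopt B (fst p) (snd p)))"
    by (rule card_nonopt_joint_goal)
next
  fix t and \<pi> :: "nat \<Rightarrow> nat" and D
  assume "\<pi> permutes B"
  then interpret copy_setting_perm n B C C' \<sigma> tgt \<beta> x k \<pi> by unfold_locales
  show "measure_pmf.prob (joint n offspring accept_ties B k x z0 t)
      {p. goal_reached tgt B C C' \<sigma> x (snd p) \<and> nonopt B (fst p) (snd p) = D} =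
    measure_pmf.prob (joint n offspring accept_ties B k x z0 t)
      {p. goal_reached tgt B C C' \<sigma> x (snd p) \<and> nonopt B (fst p) (snd p) = \<pi> ` D}"
    by (rule prob_joint_nonopt_image)
qed

end

theorem lemma2:
  "\<exists>\<kappa>::real. \<kappa> > 0 \<and> (\<exists>(c0::real) (n0::nat). \<forall>n \<ge> n0.
     \<forall>(B::nat set) (C::nat set) (C'::nat set) (\<sigma>::nat \<Rightarrow> nat) (\<beta>::real) (tgt::(nat \<Rightarrow> bool) option).
       B \<subseteq> {..<n} \<and> C \<subseteq> {..<n} \<and> C' \<subseteq> {..<n} \<and>
       B \<inter> C = {} \<and> B \<inter> C' = {} \<and> C \<inter> C' = {} \<and>
       card C = card C' \<and> bij_betw \<sigma> C C' \<and> strict_mono_on C \<sigma> \<and>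
       \<beta> > 0 \<and> real (card C) \<le> \<beta> * real (card B) / 2 \<longrightarrow>
       (\<exists>S A. \<forall>(x::nat \<Rightarrow> bool) (z0::nat \<Rightarrow> bool) (k::nat) (c::real).
          real k \<ge> \<beta> * real (card B) \<and> k \<le> card B \<and> c \<ge> c0 \<longrightarrow>
          (\<forall>t::nat. real t \<ge> c * real (card C) * ln (real n) / \<beta> \<longrightarrow>
             measure_pmf.prob (joint n S A B k x z0 t)
               {p. \<not> goal_reached tgt B C C' \<sigma> x (snd p)} \<le> real n powr (- \<kappa> * c)) \<and>
          (\<forall>t::nat. \<forall>p \<in> set_pmf (joint n S A B k x z0 t).
             goal_reached tgt B C C' \<sigma> x (snd p) \<longrightarrow>
             real (card (nonopt B (fst p) (snd p))) \<ge> \<beta> * real (card B) - real (card C)) \<and>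
          (\<forall>(t::nat) \<pi> D. \<pi> permutes B \<longrightarrow>
             measure_pmf.prob (joint n S A B k x z0 t)
               {p. goal_reached tgt B C C' \<sigma> x (snd p) \<and> nonopt B (fst p) (snd p) = D} =
             measure_pmf.prob (joint n S A B k x z0 t)
               {p. goal_reached tgt B C C' \<sigma> x (snd p) \<and> nonopt B (fst p) (snd p) = \<pi> ` D})))"
  apply (rule exI[of _ "1/8"], rule conjI, simp)
  apply (intro exI[of _ "8::real"] exI[of _ "2::nat"] allI impI exI, elim conjE)
  apply (rule copy_setting.copy_strategy_guarantees; (unfold_locales)?; assumption)
  done

end
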